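(* Let $L,R,M\in\mathbb{N}$, let $\mathcal{X}$ be any set and $\Phi\subseteq\{0,1\}^{\mathcal{X}}$ any set of features closed under negation, and let $\mathcal{T}$ be the relaxed component model teacher class (defined in the context) for these parameters. Let $H=\{(x_0,0)\}$ for some $x_0\in\mathcal{X}$ such that $\mathcal{T}$ is consistent with $H$. Then $\mathrm{DFFdim}(\mathcal{T},H)\leq RM$.
   Context: Setting. $\mathcal{X}$ is a set of examples, $\mathcal{Y}$ a finite set of labels, and $\Phi$ a set of Boolean features $\phi:\mathcal{X}\to\{0,1\}$; $\bot$ denotes a null symbol not in $\mathcal{X}\cup\mathcal{Y}\cup\Phi$. A teacher over $\mathcal{X},\mathcal{Y},\Phi$ is a pair $T=(\ell,\psi)$ with $\ell:\mathcal{X}\to\mathcal{Y}$ and $\psi:\mathcal{X}\times\mathcal{X}\to\Phi\cup\{\bot\}$ such that whenever $\ell(x)\neq\ell(\hat x)$, $\phi:=\psi(x,\hat x)\in\Phi$, $\phi(x)=1$ and $\phi(\hat x)=0$. A teacher class is a set of teachers. A history is a non-empty set $H\subseteq\mathcal{X}\times\mathcal{Y}$; a teacher $(\ell,\psi)$ is consistent with $H$ if $\ell(x)=y$ for all $(x,y)\in H$; $\mathcal{T}_H$ is the set of teachers in $\mathcal{T}$ consistent with $H$, and $\mathcal{T}$ is consistent with $H$ if $\mathcal{T}_H\neq\emptyset$. DFF dimension. A DFF tree is a rooted tree whose nodes are triples $\langle y,\phi,x\rangle$ with $y\in\mathcal{Y}\cup\{\bot\}$, $\phi\in\Phi\cup\{\bot\}$,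 $x\in\mathcal{X}\cup\{\bot\}$, such that the root has $y=\phi=\bot$, a node has $x=\bot$ iff it is a leaf, every edge is labeled by a pair $(\hat x,\hat y)\in\mathcal{X}\times\mathcal{Y}$, and every non-root node $\langle y,\phi,x\rangle$ with incoming edge $(\hat x,\hat y)$ has $\phi\neq\bot$ whenever $y\neq\hat y$. For a parent–child pair $\langle\cdot,\cdot,x\rangle\xrightarrow{(\hat x,\hat y)}\langle y,\phi,\cdot\rangle$ on a path, $(x,y)$ is called a labeled example in that path. A path from the root is consistent with a teacher $(\ell,\psi)$ if for every such parent–child pair on it, $\ell(x)=y$ and, if $y\neq\hat y$, $\psi(x,\hat x)=\phi$. Given $\mathcal{T}$ consistent with $H$, a DFF tree is shattered by $\mathcal{T}$ and $H$ if: (1) every non-root node $\langle y,\phi,x\rangle$ with incoming edge $(\hat x,\hat y)$ has $y\neq\hat y$; (2) the labels of the outgoing edges of each non-leaf node $v$ are exactly the pairs that belong to $H$ or are labeled examples in the path from the root to $v$; (3) every root-to-leaf path is consistent with some teacher in $\mathcal{T}_H$; (4) all root-to-leaf paths have the same number of edges, called the height. $\mathrm{DFFdim}(\mathcal{T},H)$ is the maximal height of a DFF tree shattered by $\mathcal{T}$ and $H$. Relaxed component model. Let $\mathcal{Y}=\{0,1,\dots,L\}$. For $S\subseteq\Phi$ write $S(x)=\prod_{\phi\in S}\phi(x)$. For a collection $\mathcal{S}=\{S_1,\dots,S_R\}$ of (at most $R$) subsets of $\Phi$, each of size at most $M$, and $q:[R]\to[L]$, define $\ell_{\mathcal{S},q}(x)=q(j)$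 if $S_j(x)=1$, and $\ell_{\mathcal{S},q}(x)=0$ if no $j$ has $S_j(x)=1$; $\ell_{\mathcal{S},q}$ is defined only if for every $x$ all $j$ with $S_j(x)=1$ give the same $q(j)$. Let $\mathcal{L}$ be the set of pairs $(\mathcal{S},q)$ for which $\ell_{\mathcal{S},q}$ is defined. Let $F(x)=\{\phi\in\Phi:\phi(x)=1\}$ and $\neg A=\{\neg\phi:\phi\in A\}$. $\mathcal{T}_{\mathcal{S},q}$ is the set of all teachers $(\ell_{\mathcal{S},q},\psi)$ for which there is a map $x\mapsto S(x)\in\mathcal{S}$, defined on all $x$ with $\ell_{\mathcal{S},q}(x)\neq0$, with $S(x)=S_j$ for some $j$ satisfying $S_j(x)=1$ and $q(j)=\ell_{\mathcal{S},q}(x)$, such that for all $x,\hat x$ with $\ell_{\mathcal{S},q}(x)\neq\ell_{\mathcal{S},q}(\hat x)$: if $\ell_{\mathcal{S},q}(\hat x)\neq0$ then $\psi(x,\hat x)\in F(x)\cap\neg S(\hat x)$, and otherwise $\psi(x,\hat x)\in S(x)\cap\neg F(\hat x)$. The teacher class is $\mathcal{T}=\bigcup_{(\mathcal{S},q)\in\mathcal{L}}\mathcal{T}_{\mathcal{S},q}$. *)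

theory Defs
  imports Main "HOL-Library.Extended_Nat"
begin

text \<open>Examples have type 'x (the example set X is the whole type), labels 'y,
  features 'f.  The null symbol is None.  A teacher is a pair (l, psi).\<close>

definition teacher ::
  "'y set \<Rightarrow> ('x \<Rightarrow> bool) set \<Rightarrow> ('x \<Rightarrow> 'y) \<times> ('x \<Rightarrow> 'x \<Rightarrow> ('x \<Rightarrow> bool) option) \<Rightarrow> bool" where
  "teacher Ys Phi T \<longleftrightarrow>
     (\<forall>x. fst T x \<in> Ys) \<and>
     (\<forall>x xh. snd T x xh = None \<or> (\<exists>\<phi>\<in>Phi. snd T x xh = Some \<phi>)) \<and>
     (\<forall>x xh. fst T x \<noteq> fst T xh \<longrightarrow>
        (\<exists>\<phi>. snd T x xh = Some \<phi> \<and> \<phi> \<in> Phi \<and> \<phi> x \<and> \<not> \<phi> xh))"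

definition consistent_with :: "('x \<Rightarrow> 'y) \<times> 'p \<Rightarrow> ('x \<times> 'y) set \<Rightarrow> bool" where
  "consistent_with T H \<longleftrightarrow> (\<forall>(x, y)\<in>H. fst T x = y)"

definition restrict_class :: "(('x \<Rightarrow> 'y) \<times> 'p) set \<Rightarrow> ('x \<times> 'y) set \<Rightarrow> (('x \<Rightarrow> 'y) \<times> 'p) set" where
  "restrict_class TT H = {T \<in> TT. consistent_with T H}"

definition class_consistent :: "(('x \<Rightarrow> 'y) \<times> 'p) set \<Rightarrow> ('x \<times> 'y) set \<Rightarrow> bool" where
  "class_consistent TT H \<longleftrightarrow> restrict_class TT H \<noteq> {}"

text \<open>A node is a triple (y, phi, x) of optional values together with its list of
  outgoing edges; each edge carries a label (xh, yh) and leads to a child.\<close>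

datatype ('x, 'y, 'f) dff =
  DNode (ny: "'y option") (nphi: "'f option") (nx: "'x option")
        (kids: "(('x \<times> 'y) \<times> ('x, 'y, 'f) dff) list")

text \<open>A step of a path: (x of the parent, edge label, y of the child, phi of the child).\<close>

type_synonym ('x, 'y, 'f) step = "'x option \<times> ('x \<times> 'y) \<times> 'y option \<times> 'f option"

inductive reach :: "('x, 'y, 'f) dff \<Rightarrow> ('x, 'y, 'f) step list \<Rightarrow> ('x, 'y, 'f) dff \<Rightarrow> bool"
  for t where
  reach_root: "reach t [] t"
| reach_step: "reach t p v \<Longrightarrow> (lab, c) \<in> set (kids v) \<Longrightarrow>
                 reach t (p @ [(nx v, lab, ny c, nphi c)]) c"

definition is_leaf :: "('x, 'y, 'f) dff \<Rightarrow> bool" where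
  "is_leaf v \<longleftrightarrow> kids v = []"

definition dff_tree :: "'y set \<Rightarrow> 'f set \<Rightarrow> ('x, 'y, 'f) dff \<Rightarrow> bool" where
  "dff_tree Ys Phi t \<longleftrightarrow>
     ny t = None \<and> nphi t = None \<and>
     (\<forall>p v. reach t p v \<longrightarrow>
        (ny v = None \<or> (\<exists>y\<in>Ys. ny v = Some y)) \<and>
        (nphi v = None \<or> (\<exists>\<phi>\<in>Phi. nphi v = Some \<phi>)) \<and>
        (nx v = None \<longleftrightarrow> is_leaf v) \<and>
        (\<forall>e\<in>set (kids v). snd (fst e) \<in> Ys) \<and>
        (p \<noteq> [] \<longrightarrow> ny v \<noteq> Some (snd (fst (snd (last p)))) \<longrightarrow> nphi v \<noteq> None))"

definition labeled_examples :: "('x, 'y, 'f) step list \<Rightarrow> ('x \<times> 'y) set" where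
  "labeled_examples p = {(x, y). \<exists>lab \<phi>. (Some x, lab, Some y, \<phi>) \<in> set p}"

definition path_consistent ::
  "('x \<Rightarrow> 'y) \<times> ('x \<Rightarrow> 'x \<Rightarrow> 'f option) \<Rightarrow> ('x, 'y, 'f) step list \<Rightarrow> bool" where
  "path_consistent T p \<longleftrightarrow>
     (\<forall>(xo, (xh, yh), yo, \<phi>o) \<in> set p. \<exists>x. xo = Some x \<and> yo = Some (fst T x) \<and>
        (fst T x \<noteq> yh \<longrightarrow> snd T x xh = \<phi>o))"

definition shattered ::
  "(('x \<Rightarrow> 'y) \<times> ('x \<Rightarrow> 'x \<Rightarrow> 'f option)) set \<Rightarrow> ('x \<times> 'y) set \<Rightarrow> ('x, 'y, 'f) dff \<Rightarrow> nat \<Rightarrow> bool" where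
  "shattered TT H t h \<longleftrightarrow>
     (\<forall>p v. reach t p v \<longrightarrow> p \<noteq> [] \<longrightarrow> ny v \<noteq> Some (snd (fst (snd (last p))))) \<and>
     (\<forall>p v. reach t p v \<longrightarrow> \<not> is_leaf v \<longrightarrow> fst ` set (kids v) = H \<union> labeled_examples p) \<and>
     (\<forall>p v. reach t p v \<longrightarrow> is_leaf v \<longrightarrow> (\<exists>T\<in>restrict_class TT H. path_consistent T p)) \<and>
     (\<forall>p v. reach t p v \<longrightarrow> is_leaf v \<longrightarrow> length p = h)"

definition DFFdim ::
  "'y set \<Rightarrow> 'f set \<Rightarrow> (('x \<Rightarrow> 'y) \<times> ('x \<Rightarrow> 'x \<Rightarrow> 'f option)) set \<Rightarrow> ('x \<times> 'y) set \<Rightarrow> enat" where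
  "DFFdim Ys Phi TT H = Sup {enat h | h. \<exists>t. dff_tree Ys Phi t \<and> shattered TT H t h}"

definition sat :: "('x \<Rightarrow> bool) set \<Rightarrow> 'x \<Rightarrow> bool" where
  "sat S x \<longleftrightarrow> (\<forall>\<phi>\<in>S. \<phi> x)"

definition neg :: "('x \<Rightarrow> bool) \<Rightarrow> ('x \<Rightarrow> bool)" where
  "neg \<phi> = (\<lambda>x. \<not> \<phi> x)"

definition Fset :: "('x \<Rightarrow> bool) set \<Rightarrow> 'x \<Rightarrow> ('x \<Rightarrow> bool) set" where
  "Fset Phi x = {\<phi> \<in> Phi. \<phi> x}"

text \<open>The collection is indexed S 1, ..., S R; q maps indices 1..R to labels 1..L.\<close>

definition rcm_label :: "nat \<Rightarrow> (nat \<Rightarrow> ('x \<Rightarrow> bool) set) \<Rightarrow> (nat \<Rightarrow> nat) \<Rightarrow> 'x \<Rightarrow> nat" where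
  "rcm_label R S q x =
     (if \<exists>j\<in>{1..R}. sat (S j) x then q (SOME j. j \<in> {1..R} \<and> sat (S j) x) else 0)"

definition rcm_defined :: "nat \<Rightarrow> (nat \<Rightarrow> ('x \<Rightarrow> bool) set) \<Rightarrow> (nat \<Rightarrow> nat) \<Rightarrow> bool" where
  "rcm_defined R S q \<longleftrightarrow>
     (\<forall>x. \<forall>i\<in>{1..R}. \<forall>j\<in>{1..R}. sat (S i) x \<longrightarrow> sat (S j) x \<longrightarrow> q i = q j)"

definition rcm_params ::
  "nat \<Rightarrow> nat \<Rightarrow> nat \<Rightarrow> ('x \<Rightarrow> bool) set \<Rightarrow> ((nat \<Rightarrow> ('x \<Rightarrow> bool) set) \<times> (nat \<Rightarrow> nat)) set" where
  "rcm_params L R M Phi =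
     {(S, q). (\<forall>j\<in>{1..R}. S j \<subseteq> Phi \<and> finite (S j) \<and> card (S j) \<le> M \<and> q j \<in> {1..L})
              \<and> rcm_defined R S q}"

definition rcm_teachers ::
  "nat \<Rightarrow> nat \<Rightarrow> ('x \<Rightarrow> bool) set \<Rightarrow> (nat \<Rightarrow> ('x \<Rightarrow> bool) set) \<Rightarrow> (nat \<Rightarrow> nat)
     \<Rightarrow> (('x \<Rightarrow> nat) \<times> ('x \<Rightarrow> 'x \<Rightarrow> ('x \<Rightarrow> bool) option)) set" where
  "rcm_teachers L R Phi S q =
     {(l, \<psi>). l = rcm_label R S q \<and> teacher {0..L} Phi (l, \<psi>) \<and>
        (\<exists>Sx :: 'x \<Rightarrow> ('x \<Rightarrow> bool) set.
           (\<forall>x. l x \<noteq> 0 \<longrightarrow> (\<exists>j\<in>{1..R}. Sx x = S j \<and> sat (S j) x \<and> q j = l x)) \<and>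
           (\<forall>x xh. l x \<noteq> l xh \<longrightarrow>
              (if l xh \<noteq> 0 then (\<exists>\<phi>. \<psi> x xh = Some \<phi> \<and> \<phi> \<in> Fset Phi x \<inter> neg ` Sx xh)
               else (\<exists>\<phi>. \<psi> x xh = Some \<phi> \<and> \<phi> \<in> Sx x \<inter> neg ` Fset Phi xh))))}"

definition rcm_class ::
  "nat \<Rightarrow> nat \<Rightarrow> nat \<Rightarrow> ('x \<Rightarrow> bool) set
     \<Rightarrow> (('x \<Rightarrow> nat) \<times> ('x \<Rightarrow> 'x \<Rightarrow> ('x \<Rightarrow> bool) option)) set" where
  "rcm_class L R M Phi = (\<Union>(S, q)\<in>rcm_params L R M Phi. rcm_teachers L R Phi S q)"

end

theory Submission
  imports Defs
begin

text \<open>Follow a single learner down a shattered tree; since every edge of a shattered path is a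
  mistake, each step yields a feedback feature. When the learner predicted the default label 0 for x,
  the feature is a conjunct of the component S(x) and is recorded under the labeled example (x, l x);
  when it predicted through an earlier example xh, the negated feature is a conjunct of S(xh) that
  fails at x and is recorded under xh. The learner predicts through a recorded example exactly when
  all conjuncts recorded for it hold at x. Hence every record is new, and distinct examples carrying
  records have distinct components: a recorded example with the component of x would have matched x.
  So the records inject into the disjoint union of S 1, ..., S R, of size at most R M.\<close>

inductive follows :: "(('x, 'y, 'f) step list \<Rightarrow> 'x \<Rightarrow> 'x \<times> 'y) \<Rightarrow> ('x, 'y, 'f) step list \<Rightarrow> bool"
  for \<sigma> where
  follows_Nil: "follows \<sigma> []"
| follows_snoc: "follows \<sigma> p \<Longrightarrow> follows \<sigma> (p @ [(Some x, \<sigma> p x, yo, \<phi>o)])"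

definition mistake_step :: "('x \<Rightarrow> 'y) \<Rightarrow> ('x \<Rightarrow> 'x \<Rightarrow> 'f option) \<Rightarrow> ('x, 'y, 'f) step \<Rightarrow> bool" where
  "mistake_step l \<psi> s \<longleftrightarrow> (\<exists>x xh yh. s = (Some x, (xh, yh), Some (l x), \<psi> x xh) \<and> yh \<noteq> l x)"

lemma size_kid_less:
  assumes "(lab, c) \<in> set (kids v)"
  shows "size c < size v"
proof (cases v)
  case (DNode y \<phi> x ks)
  have "size c \<le> size_list (size_prod size size) ks"
    using assms DNode by (intro size_list_estimation'[of "(lab, c)"]) auto
  then show ?thesis using DNode by simp
qed

lemma reach_leaf_following:
  assumes inner: "\<And>p v. reach t p v \<Longrightarrow> \<not> is_leaf v \<Longrightarrow> nx v \<noteq> None"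
    and edge: "\<And>p v x. reach t p v \<Longrightarrow> \<not> is_leaf v \<Longrightarrow> \<sigma> p x \<in> fst ` set (kids v)"
  shows "\<exists>p w. reach t p w \<and> is_leaf w \<and> follows \<sigma> p"
proof -
  have "\<exists>p' w. reach t p' w \<and> is_leaf w \<and> follows \<sigma> p'" if "reach t p v" "follows \<sigma> p" for p v
    using that
  proof (induction "size v" arbitrary: p v rule: less_induct)
    case less
    show ?case
    proof (cases "is_leaf v")
      case False
      then obtain x where x: "nx v = Some x" using inner less.prems(1) by blast
      obtain c where c: "(\<sigma> p x, c) \<in> set (kids v)" using edge[OF less.prems(1) False, of x] by force
      have "reach t (p @ [(nx v, \<sigma> p x, ny c, nphi c)]) c"
        using less.prems(1) c by (rule reach_step)
      moreover have "follows \<sigma> (p @ [(nx v, \<sigma> p x, ny c, nphi c)])"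
        unfolding x using less.prems(2) by (rule follows_snoc)
      ultimately show ?thesis using less.hyps[OF size_kid_less[OF c]] by blast
    qed (use less.prems in blast)
  qed
  then show ?thesis using reach_root follows_Nil by blast
qed

lemma reach_mistake_steps:
  assumes "reach t p v"
    and "\<And>q u. reach t q u \<Longrightarrow> q \<noteq> [] \<Longrightarrow> ny u \<noteq> Some (snd (fst (snd (last q))))"
    and "path_consistent (l, \<psi>) p"
  shows "\<forall>s\<in>set p. mistake_step l \<psi> s"
  using assms
proof (induction rule: reach.induct)
  case (reach_step p v lab c)
  have "ny c \<noteq> Some (snd lab)"
    using reach_step.prems(1)[OF reach.reach_step[OF reach_step.hyps]] by simp
  then have "mistake_step l \<psi> (nx v, lab, ny c, nphi c)"
    using reach_step.prems(2) by (cases lab) (auto simp: path_consistent_def mistake_step_def)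
  moreover have "path_consistent (l, \<psi>) p"
    using reach_step.prems(2) by (simp add: path_consistent_def)
  ultimately show ?case using reach_step.IH reach_step.prems(1) by simp
qed simp

(* Meaningful only on mistake steps, where all three options are Some. *)
definition feedback_record :: "('x, nat, 'x \<Rightarrow> bool) step \<Rightarrow> ('x \<times> nat) \<times> ('x \<Rightarrow> bool)" where
  "feedback_record s = (case s of (xo, (xh, yh), yo, \<phi>o) \<Rightarrow>
     if yh = 0 then ((the xo, the yo), the \<phi>o) else ((xh, yh), neg (the \<phi>o)))"

definition recorded :: "('x, nat, 'x \<Rightarrow> bool) step list \<Rightarrow> 'x \<times> nat \<Rightarrow> ('x \<Rightarrow> bool) set" where
  "recorded p k = {\<phi>. (k, \<phi>) \<in> feedback_record ` set p}"

definition record_matches :: "('x, nat, 'x \<Rightarrow> bool) step list \<Rightarrow> 'x \<Rightarrow> 'x \<times> nat \<Rightarrow> bool" where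
  "record_matches p x k \<longleftrightarrow> k \<in> labeled_examples p \<and> recorded p k \<noteq> {} \<and> sat (recorded p k) x"

definition learner :: "'x \<Rightarrow> ('x, nat, 'x \<Rightarrow> bool) step list \<Rightarrow> 'x \<Rightarrow> 'x \<times> nat" where
  "learner x0 p x = (if \<exists>k. record_matches p x k then SOME k. record_matches p x k else (x0, 0))"

lemma learner_cases:
  obtains "record_matches p x (learner x0 p x)"
  | "learner x0 p x = (x0, 0)" "\<And>k. \<not> record_matches p x k"
  unfolding learner_def by metis

lemma learner_edge: "learner x0 p x \<in> {(x0, 0)} \<union> labeled_examples p"
  by (cases x0 p x rule: learner_cases) (auto simp: record_matches_def)

lemma recorded_snoc:
  "recorded (p @ [s]) k = recorded p k \<union> {\<phi>. (k, \<phi>) = feedback_record s}"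
  by (auto simp: recorded_def)

lemma labeled_examples_snoc:
  "labeled_examples (p @ [s]) = labeled_examples p \<union> labeled_examples [s]"
  by (auto simp: labeled_examples_def)

(* A teacher of the relaxed component model with its component map Sx (the paper's S(x)). *)
locale component_teacher =
  fixes Phi :: "('x \<Rightarrow> bool) set" and R M :: nat and S :: "nat \<Rightarrow> ('x \<Rightarrow> bool) set"
    and x0 :: 'x and l :: "'x \<Rightarrow> nat" and \<psi> :: "'x \<Rightarrow> 'x \<Rightarrow> ('x \<Rightarrow> bool) option"
    and Sx :: "'x \<Rightarrow> ('x \<Rightarrow> bool) set"
  assumes finite_component: "j \<in> {1..R} \<Longrightarrow> finite (S j)"
    and card_component: "j \<in> {1..R} \<Longrightarrow> card (S j) \<le> M"
    and label_x0: "l x0 = 0"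
    and component: "l x \<noteq> 0 \<Longrightarrow> \<exists>j\<in>{1..R}. Sx x = S j \<and> sat (S j) x"
    and feedback_component: "l x \<noteq> l xh \<Longrightarrow> l xh \<noteq> 0 \<Longrightarrow>
      \<exists>\<phi>. \<psi> x xh = Some \<phi> \<and> \<phi> \<in> Fset Phi x \<inter> neg ` Sx xh"
    and feedback_default: "l x \<noteq> l xh \<Longrightarrow> l xh = 0 \<Longrightarrow>
      \<exists>\<phi>. \<psi> x xh = Some \<phi> \<and> \<phi> \<in> Sx x \<inter> neg ` Fset Phi xh"
begin

definition sound_records :: "('x, nat, 'x \<Rightarrow> bool) step list \<Rightarrow> bool" where
  "sound_records p \<longleftrightarrow>
     (\<forall>(k, \<phi>) \<in> feedback_record ` set p.
        k \<in> labeled_examples p \<and> snd k = l (fst k) \<and> snd k \<noteq> 0 \<and> \<phi> \<in> Sx (fst k)) \<and>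
     (\<forall>k k'. recorded p k \<noteq> {} \<longrightarrow> recorded p k' \<noteq> {} \<longrightarrow> Sx (fst k) = Sx (fst k') \<longrightarrow> k = k') \<and>
     distinct (map feedback_record p)"

lemma sound_records_Nil: "sound_records []"
  by (simp add: sound_records_def recorded_def)

lemma sound_records_keyD:
  assumes "sound_records p" "(k, \<phi>) \<in> feedback_record ` set p"
  shows "k \<in> labeled_examples p" "snd k = l (fst k)" "snd k \<noteq> 0" "\<phi> \<in> Sx (fst k)"
  using assms unfolding sound_records_def by auto

lemma sound_records_recorded:
  assumes "sound_records p" "recorded p k \<noteq> {}"
  shows "k \<in> labeled_examples p" "snd k = l (fst k)" "snd k \<noteq> 0" "recorded p k \<subseteq> Sx (fst k)"
proof -
  obtain \<phi> where "(k, \<phi>) \<in> feedback_record ` set p"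
    using assms(2) unfolding recorded_def by blast
  then show "k \<in> labeled_examples p" "snd k = l (fst k)" "snd k \<noteq> 0"
    using sound_records_keyD[OF assms(1)] by blast+
  show "recorded p k \<subseteq> Sx (fst k)"
    using sound_records_keyD(4)[OF assms(1)] unfolding recorded_def by blast
qed

lemma sound_records_separatedD:
  "sound_records p \<Longrightarrow> recorded p k \<noteq> {} \<Longrightarrow> recorded p k' \<noteq> {} \<Longrightarrow> Sx (fst k) = Sx (fst k') \<Longrightarrow> k = k'"
  unfolding sound_records_def by blast

lemma sound_records_distinct: "sound_records p \<Longrightarrow> distinct (map feedback_record p)"
  unfolding sound_records_def by blast

lemma sound_records_snoc:
  assumes sound: "sound_records p" and new_record: "feedback_record s = (k, \<phi>)"
    and key: "k \<in> labeled_examples (p @ [s])" "snd k = l (fst k)" "snd k \<noteq> 0"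
    and feature: "\<phi> \<in> Sx (fst k)" "\<phi> \<notin> recorded p k"
    and separated: "\<And>k'. recorded p k' \<noteq> {} \<Longrightarrow> Sx (fst k') = Sx (fst k) \<Longrightarrow> k' = k"
  shows "sound_records (p @ [s])"
proof -
  have "(k, \<phi>) \<notin> feedback_record ` set p"
    using feature(2) by (simp add: recorded_def)
  then have "distinct (map feedback_record (p @ [s]))"
    using sound new_record by (simp add: sound_records_def)
  moreover have "\<forall>(k', \<phi>') \<in> feedback_record ` set (p @ [s]).
      k' \<in> labeled_examples (p @ [s]) \<and> snd k' = l (fst k') \<and> snd k' \<noteq> 0 \<and> \<phi>' \<in> Sx (fst k')"
    using sound new_record key feature(1)
    unfolding sound_records_def by (fastforce simp: labeled_examples_snoc)
  moreover have "recorded (p @ [s]) k' \<noteq> {} \<longleftrightarrow> recorded p k' \<noteq> {} \<or> k' = k" for k'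
    using new_record by (auto simp: recorded_snoc)
  then have "\<forall>k' k''. recorded (p @ [s]) k' \<noteq> {} \<longrightarrow> recorded (p @ [s]) k'' \<noteq> {} \<longrightarrow>
      Sx (fst k') = Sx (fst k'') \<longrightarrow> k' = k''"
    using sound separated unfolding sound_records_def by metis
  ultimately show ?thesis
    unfolding sound_records_def by blast
qed

lemma sound_records_matching_step:
  assumes sound: "sound_records p" and matches: "record_matches p x k"
    and mistake: "mistake_step l \<psi> (Some x, k, yo, \<phi>o)"
  shows "sound_records (p @ [(Some x, k, yo, \<phi>o)])"
proof -
  obtain xh yh where k: "k = (xh, yh)" by fastforce
  have old: "recorded p k \<noteq> {}" "sat (recorded p k) x"
    using matches by (simp_all add: record_matches_def)
  note key = sound_records_recorded[OF sound old(1)]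
  have step: "yh \<noteq> l x" "\<phi>o = \<psi> x xh" "yo = Some (l x)"
    using mistake k by (auto simp: mistake_step_def)
  obtain \<phi> where \<phi>: "\<psi> x xh = Some \<phi>" "\<phi> x" "\<phi> \<in> neg ` Sx xh"
    using feedback_component[of x xh] key(2,3) step(1) k by (auto simp: Fset_def)
  then obtain \<chi> where \<chi>: "\<phi> = neg \<chi>" "\<chi> \<in> Sx xh" by blast
  have new_record: "feedback_record (Some x, k, yo, \<phi>o) = (k, \<chi>)"
    using key(3) k step(2,3) \<phi>(1) \<chi>(1) by (simp add: feedback_record_def neg_def)
  show ?thesis
  proof (rule sound_records_snoc[OF sound new_record])
    show "k \<in> labeled_examples (p @ [(Some x, k, yo, \<phi>o)])"
      using key(1) by (simp add: labeled_examples_snoc)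
    show "snd k = l (fst k)" "snd k \<noteq> 0"
      using key(2,3) .
    show "\<chi> \<in> Sx (fst k)"
      using \<chi>(2) k by simp
    show "\<chi> \<notin> recorded p k"
      using old(2) \<phi>(2) \<chi>(1) by (auto simp: sat_def neg_def)
    show "k' = k" if "recorded p k' \<noteq> {}" "Sx (fst k') = Sx (fst k)" for k'
      using sound_records_separatedD[OF sound that(1) old(1) that(2)] .
  qed
qed

lemma sound_records_default_step:
  assumes sound: "sound_records p" and no_match: "\<And>k. \<not> record_matches p x k"
    and mistake: "mistake_step l \<psi> (Some x, (x0, 0), yo, \<phi>o)"
  shows "sound_records (p @ [(Some x, (x0, 0), yo, \<phi>o)])"
proof -
  have step: "l x \<noteq> 0" "\<phi>o = \<psi> x x0" "yo = Some (l x)"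
    using mistake by (auto simp: mistake_step_def)
  obtain \<phi> where \<phi>: "\<psi> x x0 = Some \<phi>" "\<phi> \<in> Sx x"
    using feedback_default[of x x0] label_x0 step(1) by auto
  then have new_record: "feedback_record (Some x, (x0, 0), yo, \<phi>o) = ((x, l x), \<phi>)"
    using step(2,3) by (simp add: feedback_record_def)
  obtain j where "Sx x = S j" "sat (S j) x"
    using component step(1) by blast
  have separated: "Sx (fst k) \<noteq> Sx x" if "recorded p k \<noteq> {}" for k
  proof
    assume "Sx (fst k) = Sx x"
    then have "sat (recorded p k) x"
      using sound_records_recorded(4)[OF sound that] \<open>Sx x = S j\<close> \<open>sat (S j) x\<close>
      by (auto simp: sat_def)
    then show False
      using no_match[of k] sound_records_recorded(1)[OF sound that] that
      by (simp add: record_matches_def)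
  qed
  show ?thesis
  proof (rule sound_records_snoc[OF sound new_record])
    show "(x, l x) \<in> labeled_examples (p @ [(Some x, (x0, 0), yo, \<phi>o)])"
      using step(3) by (auto simp: labeled_examples_def)
    show "snd (x, l x) = l (fst (x, l x))" "snd (x, l x) \<noteq> 0" "\<phi> \<in> Sx (fst (x, l x))"
      using step(1) \<phi>(2) by simp_all
    show "\<phi> \<notin> recorded p (x, l x)"
      using separated[of "(x, l x)"] by auto
    show "k = (x, l x)" if "recorded p k \<noteq> {}" "Sx (fst k) = Sx (fst (x, l x))" for k
      using separated[OF that(1)] that(2) by simp
  qed
qed

lemma sound_records_following:
  "follows (learner x0) p \<Longrightarrow> \<forall>s\<in>set p. mistake_step l \<psi> s \<Longrightarrow> sound_records p"
proof (induction rule: follows.induct)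
  case (follows_snoc p x yo \<phi>o)
  then have "sound_records p" "mistake_step l \<psi> (Some x, learner x0 p x, yo, \<phi>o)" by simp_all
  then show ?case
    by (cases x0 p x rule: learner_cases)
      (simp_all add: sound_records_matching_step sound_records_default_step)
qed (simp add: sound_records_Nil)

lemma sound_records_length_le:
  assumes sound: "sound_records p"
  shows "length p \<le> R * M"
proof -
  let ?W = "feedback_record ` set p"
  let ?f = "\<lambda>(k, \<phi>). (Sx (fst k), \<phi>)"
  let ?B = "Sigma (S ` {1..R}) id"
  have inj: "inj_on ?f ?W"
  proof (rule inj_onI)
    fix a b assume "a \<in> ?W" "b \<in> ?W" "?f a = ?f b"
    moreover obtain k \<phi> k' \<phi>' where "a = (k, \<phi>)" "b = (k', \<phi>')" by fastforce
    ultimately have "\<phi> = \<phi>'" "Sx (fst k) = Sx (fst k')" "recorded p k \<noteq> {}" "recorded p k' \<noteq> {}"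
      by (auto simp: recorded_def)
    then show "a = b"
      using sound_records_separatedD[OF sound] \<open>a = (k, \<phi>)\<close> \<open>b = (k', \<phi>')\<close> by blast
  qed
  have sub: "?f ` ?W \<subseteq> ?B"
  proof
    fix z assume "z \<in> ?f ` ?W"
    then obtain k \<phi> where z: "z = (Sx (fst k), \<phi>)" "(k, \<phi>) \<in> ?W" by auto
    note key = sound_records_keyD[OF sound z(2)]
    obtain j where "j \<in> {1..R}" "Sx (fst k) = S j"
      using component[of "fst k"] key(2,3) by auto
    then show "z \<in> ?B"
      using z(1) key(4) by auto
  qed
  have "finite ?B"
    by (rule finite_SigmaI) (auto simp: finite_component)
  have "length p = card ?W"
    using sound_records_distinct[OF sound] distinct_card by fastforce
  also have "\<dots> = card (?f ` ?W)"
    using inj by (simp add: card_image)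
  also have "\<dots> \<le> card ?B"
    using \<open>finite ?B\<close> sub by (rule card_mono)
  also have "\<dots> = sum card (S ` {1..R})"
    by (subst card_SigmaI) (auto simp: finite_component)
  also have "\<dots> \<le> sum (card \<circ> S) {1..R}"
    by (rule sum_image_le) auto
  also have "\<dots> \<le> (\<Sum>j\<in>{1..R}. M)"
    by (rule sum_mono) (simp add: card_component)
  also have "\<dots> = R * M"
    by simp
  finally show ?thesis .
qed

end

lemma rcm_class_component_teacher:
  assumes "(l, \<psi>) \<in> restrict_class (rcm_class L R M Phi) {(x0, 0)}"
  obtains S Sx where "component_teacher Phi R M S x0 l \<psi> Sx"
proof -
  obtain S q where params: "(S, q) \<in> rcm_params L R M Phi"
    and teacher: "(l, \<psi>) \<in> rcm_teachers L R Phi S q" and x0: "l x0 = 0"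
    using assms by (auto simp: restrict_class_def rcm_class_def consistent_with_def)
  obtain Sx where component: "\<forall>x. l x \<noteq> 0 \<longrightarrow> (\<exists>j\<in>{1..R}. Sx x = S j \<and> sat (S j) x \<and> q j = l x)"
    and feedback: "\<forall>x xh. l x \<noteq> l xh \<longrightarrow>
      (if l xh \<noteq> 0 then (\<exists>\<phi>. \<psi> x xh = Some \<phi> \<and> \<phi> \<in> Fset Phi x \<inter> neg ` Sx xh)
       else (\<exists>\<phi>. \<psi> x xh = Some \<phi> \<and> \<phi> \<in> Sx x \<inter> neg ` Fset Phi xh))"
    using teacher unfolding rcm_teachers_def by blast
  have "component_teacher Phi R M S x0 l \<psi> Sx"
  proof
    fix j assume "j \<in> {1..R}"
    then show "finite (S j)" "card (S j) \<le> M"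
      using params by (simp_all add: rcm_params_def)
  next
    fix x xh
    show "l x \<noteq> 0 \<Longrightarrow> \<exists>j\<in>{1..R}. Sx x = S j \<and> sat (S j) x"
      using component by blast
    show "l x \<noteq> l xh \<Longrightarrow> l xh \<noteq> 0 \<Longrightarrow> \<exists>\<phi>. \<psi> x xh = Some \<phi> \<and> \<phi> \<in> Fset Phi x \<inter> neg ` Sx xh"
      using feedback[rule_format, of x xh] by simp
    show "l x \<noteq> l xh \<Longrightarrow> l xh = 0 \<Longrightarrow> \<exists>\<phi>. \<psi> x xh = Some \<phi> \<and> \<phi> \<in> Sx x \<inter> neg ` Fset Phi xh"
      using feedback[rule_format, of x xh] by simp
  qed (rule x0)
  then show thesis by (rule that)
qed

lemma shattered_learner_path:
  assumes tree: "dff_tree Ys Phi t" and shattered: "shattered TT {(x0, 0)} t h"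
  obtains p l \<psi> where "follows (learner x0) p" "length p = h"
    "(l, \<psi>) \<in> restrict_class TT {(x0, 0)}" "\<forall>s\<in>set p. mistake_step l \<psi> s"
proof -
  have inner: "nx v \<noteq> None" if "reach t p v" "\<not> is_leaf v" for p v
    using tree that unfolding dff_tree_def by blast
  obtain mistaken: "\<And>p v. reach t p v \<Longrightarrow> p \<noteq> [] \<Longrightarrow> ny v \<noteq> Some (snd (fst (snd (last p))))"
    and edges: "\<And>p v. reach t p v \<Longrightarrow> \<not> is_leaf v \<Longrightarrow> fst ` set (kids v) = {(x0, 0)} \<union> labeled_examples p"
    and realized: "\<And>p v. reach t p v \<Longrightarrow> is_leaf v \<Longrightarrow>
      \<exists>T\<in>restrict_class TT {(x0, 0)}. path_consistent T p"
    and height: "\<And>p v. reach t p v \<Longrightarrow> is_leaf v \<Longrightarrow> length p = h"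
    using shattered unfolding shattered_def by blast
  have chosen_edge: "learner x0 p x \<in> fst ` set (kids v)" if "reach t p v" "\<not> is_leaf v" for p v x
    using learner_edge unfolding edges[OF that] .
  obtain p w where leaf: "reach t p w" "is_leaf w" and follows: "follows (learner x0) p"
    using reach_leaf_following[of t "learner x0"] inner chosen_edge by blast
  obtain l \<psi> where teacher: "(l, \<psi>) \<in> restrict_class TT {(x0, 0)}"
    and "path_consistent (l, \<psi>) p"
    using realized[OF leaf] by fast
  then have "\<forall>s\<in>set p. mistake_step l \<psi> s"
    using reach_mistake_steps[OF leaf(1) mistaken] by blast
  then show thesis
    using that follows height[OF leaf] teacher by blast
qed

theorem mainTheorem5:
  fixes L R M :: nat and Phi :: "('x \<Rightarrow> bool) set" and x0 :: 'x
  assumes "\<forall>\<phi>\<in>Phi. neg \<phi> \<in> Phi"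
    and "class_consistent (rcm_class L R M Phi) {(x0, 0)}"
  shows "DFFdim {0..L} Phi (rcm_class L R M Phi) {(x0, 0)} \<le> enat (R * M)"
  unfolding DFFdim_def
proof (rule Sup_least, clarify)
  fix h t
  assume "dff_tree {0..L} Phi t" "shattered (rcm_class L R M Phi) {(x0, 0)} t h"
  then obtain p l \<psi> where follows: "follows (learner x0) p" and "length p = h"
    and teacher: "(l, \<psi>) \<in> restrict_class (rcm_class L R M Phi) {(x0, 0)}"
    and mistakes: "\<forall>s\<in>set p. mistake_step l \<psi> s"
    by (rule shattered_learner_path)
  obtain S Sx where "component_teacher Phi R M S x0 l \<psi> Sx"
    using rcm_class_component_teacher[OF teacher] .
  then interpret component_teacher Phi R M S x0 l \<psi> Sx .
  have "length p \<le> R * M"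
    using sound_records_following[OF follows mistakes] by (rule sound_records_length_le)
  then show "enat h \<le> enat (R * M)"
    using \<open>length p = h\<close> by simp
qed

end
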